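(* Let $\Delta \subset \mathbb{R}^2$ be a compact connected domain with connected piecewise-linear boundary, let $\chi$ be a finite set of nodes in $\Delta$ containing the fence nodes $\chi_f$, and let $\chi_{int} = \chi \setminus \chi_f$. Let $\mathcal{R}$ be the Rips complex of $\chi$ with parameter $r_b>0$ and $\mathcal{F} \subseteq \mathcal{R}$ the fence subcomplex. Let $X_v$, $v \in \chi_{int}$, be independent random variables giving the failure time of node $v$, and assume that $(\mathcal{R},\mathcal{F})$ passes the de Silva–Ghrist criterion (i.e., $\emptyset$ is not a death set). Let $A_1, \dots, A_k$ be all the minimal death sets, and for $A \subseteq \chi_{int}$ put $S_A = \max_{v \in A} X_v$. Then for every $t$, $$\mathbb{P}(\text{failure by time } t) = \mathbb{P}\left( \min_{1 \le i \le k} S_{A_i} \le t \right),$$ where "failure by time $t$" is the event that the set $\{v \in \chi_{int} : X_v \le t\}$ of nodes failed by time $t$ is a death set.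
   Context: Setting: the fence nodes $\chi_f$ are the vertices of the piecewise-linear boundary $\partial\Delta$, cyclically ordered, with cyclically consecutive fence nodes at distance less than $r_b$. The Rips complex $\mathcal{R}$ has a simplex for every nonempty subset of $\chi$ whose points are pairwise at distance $< r_b$. The fence $\mathcal{F}$ is the subcomplex consisting of the fence nodes and the edges joining cyclically consecutive fence nodes (a cycle homeomorphic to $S^1$). For $B \subseteq \chi_{int}$, $\mathcal{R}_B$ denotes the maximal subcomplex of $\mathcal{R}$ with vertex set $\chi \setminus B$ (the simplices containing no vertex of $B$). Homology is with $\mathbb{Z}_2$ coefficients. A class in $H_2(\mathcal{R}_B,\mathcal{F})$ is fundamental if its image under the connecting homomorphism $H_2(\mathcal{R}_B,\mathcal{F}) \to H_1(\mathcal{F})$ is nonzero; $(\mathcal{R}_B,\mathcal{F})$ passes the de Silva–Ghrist criterion if such a class exists. A set $B \subseteq \chi_{int}$ is a death set if $(\mathcal{R}_B,\mathcal{F})$ does not pass the criterion, and a minimal death set if moreover no proper subset of $B$ is a death set. *)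

theory Defs
  imports "HOL-Probability.Probability"
begin

type_synonym pt = "real^2"

text \<open>Abstract simplicial complexes are represented as sets of simplices; a simplex
is a nonempty finite set of vertices. Chains with Z_2 coefficients are finite sets
of simplices (a simplex belongs to the chain iff its coefficient is 1).\<close>

definition rips :: "pt set \<Rightarrow> real \<Rightarrow> pt set set" where
  "rips Nodes r = {\<sigma>. \<sigma> \<noteq> {} \<and> finite \<sigma> \<and> \<sigma> \<subseteq> Nodes \<and> (\<forall>x\<in>\<sigma>. \<forall>y\<in>\<sigma>. dist x y < r)}"

definition fence :: "(nat \<Rightarrow> pt) \<Rightarrow> nat \<Rightarrow> pt set set" where
  "fence f n = {{f i} | i. i < n} \<union> {{f i, f (Suc i mod n)} | i. i < n}"

definition restrict_cplx :: "'v set set \<Rightarrow> 'v set \<Rightarrow> 'v set set" where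
  "restrict_cplx K B = {\<sigma>\<in>K. \<sigma> \<inter> B = {}}"

definition chain :: "'v set set \<Rightarrow> nat \<Rightarrow> 'v set set \<Rightarrow> bool" where
  "chain K k c \<longleftrightarrow> finite c \<and> c \<subseteq> K \<and> (\<forall>\<sigma>\<in>c. card \<sigma> = Suc k)"

definition bd :: "'v set set \<Rightarrow> 'v set set" where
  "bd c = {\<tau>. \<tau> \<noteq> {} \<and> odd (card {\<sigma>\<in>c. \<tau> \<subseteq> \<sigma> \<and> card \<sigma> = Suc (card \<tau>)})}"

text \<open>Existence of a fundamental class: a class in H_2(K,L) (represented by a relative
2-cycle c, i.e. a 2-chain of K whose boundary is a 1-chain of L) whose image under the
connecting homomorphism H_2(K,L) \<rightarrow> H_1(L), namely the class of bd c in
H_1(L) = Z_1(L)/B_1(L), is nonzero, i.e. bd c is not a boundary in L.\<close>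
definition passes_dSG :: "'v set set \<Rightarrow> 'v set set \<Rightarrow> bool" where
  "passes_dSG K L \<longleftrightarrow>
     (\<exists>c. chain K 2 c \<and> chain L 1 (bd c) \<and> \<not> (\<exists>d. chain L 2 d \<and> bd d = bd c))"

definition death_set :: "'v set set \<Rightarrow> 'v set set \<Rightarrow> 'v set \<Rightarrow> 'v set \<Rightarrow> bool" where
  "death_set R F Xint B \<longleftrightarrow> B \<subseteq> Xint \<and> \<not> passes_dSG (restrict_cplx R B) F"

definition minimal_death_set :: "'v set set \<Rightarrow> 'v set set \<Rightarrow> 'v set \<Rightarrow> 'v set \<Rightarrow> bool" where
  "minimal_death_set R F Xint B \<longleftrightarrow>
     death_set R F Xint B \<and> (\<forall>B'. B' \<subset> B \<longrightarrow> \<not> death_set R F Xint B')"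

end

theory Submission
  imports Defs
begin

text \<open>Deleting nodes only shrinks the complex, and a fundamental class of a subcomplex is
one of the larger complex; hence death sets are closed upwards. The failed set at time t is
therefore a death set iff it contains a minimal death set A_i, i.e. iff all nodes of some
A_i have failed, i.e. iff min_i S_{A_i} \<le> t. The two events coincide pointwise.\<close>

lemma passes_dSG_mono:
  assumes "passes_dSG K' L" and "K' \<subseteq> K"
  shows "passes_dSG K L"
proof -
  obtain c where "chain K' 2 c" "chain L 1 (bd c)" "\<not> (\<exists>d. chain L 2 d \<and> bd d = bd c)"
    using assms(1) unfolding passes_dSG_def by blast
  moreover from \<open>chain K' 2 c\<close> have "chain K 2 c"
    using assms(2) unfolding chain_def by blast
  ultimately show ?thesis unfolding passes_dSG_def by blast
qed

lemma death_set_mono: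
  assumes "death_set R F Xint B" and "B \<subseteq> B'" and "B' \<subseteq> Xint"
  shows "death_set R F Xint B'"
proof -
  have "restrict_cplx R B' \<subseteq> restrict_cplx R B"
    using assms(2) unfolding restrict_cplx_def by blast
  then show ?thesis
    using assms passes_dSG_mono unfolding death_set_def by blast
qed

lemma death_set_contains_minimal:
  assumes "finite B" and "death_set R F Xint B"
  shows "\<exists>B0\<subseteq>B. minimal_death_set R F Xint B0"
  using assms
proof (induction B rule: finite_psubset_induct)
  case (psubset B)
  show ?case
  proof (cases "minimal_death_set R F Xint B")
    case False
    then obtain B' where "B' \<subset> B" "death_set R F Xint B'"
      using psubset.prems unfolding minimal_death_set_def by blast
    then show ?thesis using psubset.IH by (meson psubset_imp_subset subset_trans)
  qed blast
qed

lemma death_set_iff_contains_minimal: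
  assumes "finite Xint" and "B \<subseteq> Xint"
  shows "death_set R F Xint B \<longleftrightarrow> (\<exists>B0\<subseteq>B. minimal_death_set R F Xint B0)"
proof
  assume "death_set R F Xint B"
  then show "\<exists>B0\<subseteq>B. minimal_death_set R F Xint B0"
    using assms finite_subset death_set_contains_minimal by metis
next
  assume "\<exists>B0\<subseteq>B. minimal_death_set R F Xint B0"
  then show "death_set R F Xint B"
    using assms(2) death_set_mono unfolding minimal_death_set_def by metis
qed

lemma INF_SUP_ereal_le_iff:
  fixes x :: "'v \<Rightarrow> real"
  assumes "finite I"
  shows "(INF i\<in>I. SUP v\<in>A i. ereal (x v)) \<le> ereal t \<longleftrightarrow> (\<exists>i\<in>I. \<forall>v\<in>A i. x v \<le> t)"
proof (cases "I = {}")
  case False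
  have "(INF i\<in>I. SUP v\<in>A i. ereal (x v)) \<in> (\<lambda>i. SUP v\<in>A i. ereal (x v)) ` I"
    using assms False by (subst cInf_eq_Min) (auto intro!: Min_in)
  then show ?thesis
    by (fastforce simp: SUP_le_iff intro: INF_lower2)
qed (simp add: top_ereal_def)

theorem mainTheorem2:
  fixes D :: "pt set" and Nodes :: "pt set" and f :: "nat \<Rightarrow> pt" and n :: nat
    and r\<^sub>b :: real and M :: "'a measure" and X :: "pt \<Rightarrow> 'a \<Rightarrow> real"
    and A :: "nat \<Rightarrow> pt set" and k :: nat and t :: real
  assumes "compact D" and "connected D"
    and "3 \<le> n" and "inj_on f {..<n}"
    and "frontier D = (\<Union>i<n. closed_segment (f i) (f (Suc i mod n)))"
    and "frontier D homeomorphic sphere (0::pt) 1"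
    and "\<forall>i<n. dist (f i) (f (Suc i mod n)) < r\<^sub>b"
    and "r\<^sub>b > 0"
    and "finite Nodes" and "Nodes \<subseteq> D" and "f ` {..<n} \<subseteq> Nodes"
    and "prob_space M"
    and "\<forall>v\<in>Nodes - f ` {..<n}. X v \<in> borel_measurable M"
    and "prob_space.indep_vars M (\<lambda>_. borel) X (Nodes - f ` {..<n})"
    and "passes_dSG (rips Nodes r\<^sub>b) (fence f n)"
    and "A ` {..<k} = {B. minimal_death_set (rips Nodes r\<^sub>b) (fence f n) (Nodes - f ` {..<n}) B}"
  shows "measure M {\<omega>\<in>space M. death_set (rips Nodes r\<^sub>b) (fence f n) (Nodes - f ` {..<n})
                                  {v\<in>Nodes - f ` {..<n}. X v \<omega> \<le> t}}
       = measure M {\<omega>\<in>space M. (INF i\<in>{..<k}. SUP v\<in>A i. ereal (X v \<omega>)) \<le> ereal t}"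
proof -
  let ?Xint = "Nodes - f ` {..<n}"
  let ?death = "death_set (rips Nodes r\<^sub>b) (fence f n) ?Xint"
  have A_sub: "A i \<subseteq> ?Xint" if "i < k" for i
    using assms(16) that unfolding minimal_death_set_def death_set_def by blast
  have minimal_iff: "minimal_death_set (rips Nodes r\<^sub>b) (fence f n) ?Xint B \<longleftrightarrow> (\<exists>i<k. B = A i)" for B
    using assms(16) by (auto simp: set_eq_iff image_iff)
  have "?death {v\<in>?Xint. X v \<omega> \<le> t}
      \<longleftrightarrow> (\<exists>B0\<subseteq>{v\<in>?Xint. X v \<omega> \<le> t}. minimal_death_set (rips Nodes r\<^sub>b) (fence f n) ?Xint B0)" for \<omega>
    using assms(9) by (intro death_set_iff_contains_minimal) auto
  also have "\<dots> \<omega> \<longleftrightarrow> (\<exists>i<k. A i \<subseteq> {v\<in>?Xint. X v \<omega> \<le> t})" for \<omega>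
    unfolding minimal_iff by blast
  also have "\<dots> \<omega> \<longleftrightarrow> (INF i\<in>{..<k}. SUP v\<in>A i. ereal (X v \<omega>)) \<le> ereal t" for \<omega>
    using A_sub by (fastforce simp: INF_SUP_ereal_le_iff)
  finally show ?thesis by simp
qed

end
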